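(* Fix thresholds $minUtil\in\mathbb{R}$ and $minPro\in\mathbb{R}$. Let $P\subseteq I$ be an itemset and let $y,z\in I\setminus P$ be items with $y$ coming before $z$ in the processing order, each coming after every item of $P$. Set $Y=P\cup\{y\}$ and $Z=P\cup\{z\}$, so $Y\cup Z=P\cup\{y,z\}$. Suppose that either $$\text{(1)}\quad SUM(Y.pu)+SUM(Y.rpu)-\sum_{T_c\in D,\ Y\subseteq T_c,\ Z\not\subseteq T_c}\big(pu(Y,T_c)+rpu(Y,T_c)\big) < minUtil,$$ or $$\text{(2)}\quad SUM(Y.pro)-\sum_{T_c\in D,\ Y\subseteq T_c,\ Z\not\subseteq T_c} pro(Y,T_c) < minPro\cdot|D|.$$ Then neither $Y\cup Z$ nor any descendant of $Y\cup Z$ in the set-enumeration tree is a PHUI.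
   Context: Let $I$ be a finite set of items. An uncertain database $D=\{T_1,\dots,T_n\}$ is a finite collection of transactions with $|D|=n$ and each $T_c\subseteq I$. Each item $i\in T_c$ has a quantity $q(i,T_c)>0$ and a probability $p(i,T_c)\in(0,1]$. Each item $i\in I$ has an external utility $pr(i)\in\mathbb{R}$, which may be negative. Basic quantities: - $u(i,T_c)=pr(i)\,q(i,T_c)$. - For $X\subseteq T_c$: $u(X,T_c)=\sum_{i\in X}u(i,T_c)$ and $p(X,T_c)=\prod_{i\in X}p(i,T_c)$. - $u(X)=\sum_{T_c\in D,\ X\subseteq T_c}u(X,T_c)$ and $Pro(X)=\sum_{T_c\in D,\ X\subseteq T_c}p(X,T_c)$. An itemset $X$ is a potential high-utility itemset (PHUI) if $u(X)\ge minUtil$ and $Pro(X)\ge minPro\cdot|D|$. Fix a total processing order on $I$. The paper sorts items by ascending $RTWU$ and places all items with negative external utility after the positive ones. Here $RTWU(X)=\sum_{T_c\supseteq X}\sum_{i\in T_c,\ pr(i)>0}u(i,T_c)$. The set-enumeration tree has root $\emptyset$. The children of a node $X$ are the sets $X\cup\{i\}$ with $i$ after every item of $X$. Thus the descendants of $X$ are the itemsets $W\supsetneq X$ such that every item of $W\setminus X$ comes after every item of $X$. For $X\subseteq T_c$ define: - $pro(X,T_c)=p(X,T_c)$; - $pu(X,T_c)=\sum_{i\in X,\ pr(i)>0}u(i,T_c)$; - $nu(X,T_c)=\sum_{i\in X,\ pr(i)<0}u(i,T_c)$; - $rpu(X,T_c)=\sum u(i,T_c)$ over $i\in T_c$ with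 $pr(i)>0$ and $i$ after every item of $X$. For $\ast\in\{pro,pu,nu,rpu\}$ let $SUM(X.\ast)=\sum_{T_c\in D,\ X\subseteq T_c}\ast(X,T_c)$. *)

theory Defs
  imports Complex_Main
begin

record 'a udb =
  ntr  :: nat
  trans :: "nat \<Rightarrow> 'a set"
  qty  :: "nat \<Rightarrow> 'a \<Rightarrow> real"
  prb  :: "nat \<Rightarrow> 'a \<Rightarrow> real"

definition wf_db :: "'a set \<Rightarrow> 'a udb \<Rightarrow> bool" where
  "wf_db I D \<longleftrightarrow> finite I \<and>
     (\<forall>c < ntr D. trans D c \<subseteq> I \<and>
        (\<forall>i \<in> trans D c. qty D c i > 0 \<and> prb D c i > 0 \<and> prb D c i \<le> 1))"

definition u_item :: "('a \<Rightarrow> real) \<Rightarrow> 'a udb \<Rightarrow> 'a \<Rightarrow> nat \<Rightarrow> real" where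
  "u_item pr D i c = pr i * qty D c i"

definition u_set :: "('a \<Rightarrow> real) \<Rightarrow> 'a udb \<Rightarrow> 'a set \<Rightarrow> nat \<Rightarrow> real" where
  "u_set pr D X c = (\<Sum>i\<in>X. u_item pr D i c)"

definition p_set :: "'a udb \<Rightarrow> 'a set \<Rightarrow> nat \<Rightarrow> real" where
  "p_set D X c = (\<Prod>i\<in>X. prb D c i)"

definition TX :: "'a udb \<Rightarrow> 'a set \<Rightarrow> nat set" where
  "TX D X = {c. c < ntr D \<and> X \<subseteq> trans D c}"

definition util :: "('a \<Rightarrow> real) \<Rightarrow> 'a udb \<Rightarrow> 'a set \<Rightarrow> real" where
  "util pr D X = (\<Sum>c\<in>TX D X. u_set pr D X c)"

definition Pro :: "'a udb \<Rightarrow> 'a set \<Rightarrow> real" where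
  "Pro D X = (\<Sum>c\<in>TX D X. p_set D X c)"

definition PHUI :: "('a \<Rightarrow> real) \<Rightarrow> 'a udb \<Rightarrow> real \<Rightarrow> real \<Rightarrow> 'a set \<Rightarrow> bool" where
  "PHUI pr D minUtil minPro X \<longleftrightarrow>
     util pr D X \<ge> minUtil \<and> Pro D X \<ge> minPro * real (ntr D)"

text \<open>Processing order given by an injective rank; i is after every item of X.\<close>
definition after :: "('a \<Rightarrow> nat) \<Rightarrow> 'a set \<Rightarrow> 'a \<Rightarrow> bool" where
  "after rk X i \<longleftrightarrow> (\<forall>x\<in>X. rk x < rk i)"

definition pro :: "'a udb \<Rightarrow> 'a set \<Rightarrow> nat \<Rightarrow> real" where
  "pro D X c = p_set D X c"

definition pu :: "('a \<Rightarrow> real) \<Rightarrow> 'a udb \<Rightarrow> 'a set \<Rightarrow> nat \<Rightarrow> real" where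
  "pu pr D X c = (\<Sum>i\<in>{i\<in>X. pr i > 0}. u_item pr D i c)"

definition nu :: "('a \<Rightarrow> real) \<Rightarrow> 'a udb \<Rightarrow> 'a set \<Rightarrow> nat \<Rightarrow> real" where
  "nu pr D X c = (\<Sum>i\<in>{i\<in>X. pr i < 0}. u_item pr D i c)"

definition rpu :: "('a \<Rightarrow> real) \<Rightarrow> ('a \<Rightarrow> nat) \<Rightarrow> 'a udb \<Rightarrow> 'a set \<Rightarrow> nat \<Rightarrow> real" where
  "rpu pr rk D X c = (\<Sum>i\<in>{i\<in>trans D c. pr i > 0 \<and> after rk X i}. u_item pr D i c)"

text \<open>SUM(X.f) = sum of f(X,T_c) over transactions containing X.\<close>
definition SUMX :: "'a udb \<Rightarrow> 'a set \<Rightarrow> ('a set \<Rightarrow> nat \<Rightarrow> real) \<Rightarrow> real" where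
  "SUMX D X f = (\<Sum>c\<in>TX D X. f X c)"

definition descendant :: "('a \<Rightarrow> nat) \<Rightarrow> 'a set \<Rightarrow> 'a set \<Rightarrow> 'a set \<Rightarrow> bool" where
  "descendant rk I X W \<longleftrightarrow> W \<subseteq> I \<and> X \<subset> W \<and> (\<forall>i\<in>W - X. after rk X i)"

end

theory Submission
  imports Defs
begin

text \<open>Removing from SUM(Y.f) the transactions that contain Y but not Z leaves exactly the
transactions containing Y \<union> Z. For every W that extends Y \<union> Z by items coming after Y, each
transaction containing W contains Y \<union> Z, and in it u(W) \<le> pu(Y) + rpu(Y) (the extra positive
items of W are counted by rpu, its negative items only lower u) and p(W) \<le> p(Y) (probabilities
are at most 1). Summing, u(W) and Pro(W) are bounded by the two left-hand sides of the
hypothesis, so one of the thresholds fails for W.\<close>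

lemma TX_finite: "finite (TX D X)"
  unfolding TX_def by simp

lemma TX_antimono: "X \<subseteq> V \<Longrightarrow> TX D V \<subseteq> TX D X"
  unfolding TX_def by auto

lemma SUMX_diff_not_containing:
  "SUMX D Y f - (\<Sum>c\<in>{c\<in>TX D Y. \<not> Z \<subseteq> trans D c}. f Y c) = (\<Sum>c\<in>TX D (Y \<union> Z). f Y c)"
proof -
  have "TX D (Y \<union> Z) = TX D Y - {c\<in>TX D Y. \<not> Z \<subseteq> trans D c}"
    unfolding TX_def by auto
  moreover have "SUMX D Y f = (\<Sum>c\<in>TX D Y - {c\<in>TX D Y. \<not> Z \<subseteq> trans D c}. f Y c)
      + (\<Sum>c\<in>{c\<in>TX D Y. \<not> Z \<subseteq> trans D c}. f Y c)"
    unfolding SUMX_def by (rule sum.subset_diff) (auto simp: TX_finite)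
  ultimately show ?thesis by simp
qed

lemma wf_db_transD:
  assumes "wf_db I D" "c < ntr D" "i \<in> trans D c"
  shows "qty D c i > 0" "prb D c i > 0" "prb D c i \<le> 1"
  using assms unfolding wf_db_def by auto

lemma wf_db_finite_trans:
  assumes "wf_db I D" "c < ntr D"
  shows "finite (trans D c)"
  using assms unfolding wf_db_def by (meson finite_subset)

lemma pu_nonneg:
  assumes "wf_db I D" "c < ntr D" "X \<subseteq> trans D c"
  shows "0 \<le> pu pr D X c"
  unfolding pu_def u_item_def
  by (rule sum_nonneg) (use assms wf_db_transD in force)

lemma rpu_nonneg:
  assumes "wf_db I D" "c < ntr D"
  shows "0 \<le> rpu pr rk D X c"
  unfolding rpu_def u_item_def
  by (rule sum_nonneg) (use assms wf_db_transD in force)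

lemma pro_nonneg:
  assumes "wf_db I D" "c < ntr D" "X \<subseteq> trans D c"
  shows "0 \<le> pro D X c"
  unfolding pro_def p_set_def
  by (rule prod_nonneg) (use assms wf_db_transD in force)

lemma u_set_le_pu_rpu:
  assumes db: "wf_db I D" and c: "c < ntr D" and W: "W \<subseteq> trans D c" and YW: "Y \<subseteq> W"
    and later: "\<forall>i\<in>W - Y. after rk Y i"
  shows "u_set pr D W c \<le> pu pr D Y c + rpu pr rk D Y c"
proof -
  have fin: "finite (trans D c)" using db c by (rule wf_db_finite_trans)
  then have fW: "finite W" using W finite_subset by blast
  have "u_set pr D W c = (\<Sum>i\<in>{i\<in>W. pr i > 0} \<union> {i\<in>W. \<not> pr i > 0}. u_item pr D i c)"
    unfolding u_set_def by (rule sum.cong) auto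
  also have "\<dots> = (\<Sum>i\<in>{i\<in>W. pr i > 0}. u_item pr D i c)
      + (\<Sum>i\<in>{i\<in>W. \<not> pr i > 0}. u_item pr D i c)"
    using fW by (intro sum.union_disjoint) auto
  also have "{i\<in>W. pr i > 0} = {i\<in>Y. pr i > 0} \<union> {i\<in>W - Y. pr i > 0}"
    using YW by auto
  also have "(\<Sum>i\<in>{i\<in>Y. pr i > 0} \<union> {i\<in>W - Y. pr i > 0}. u_item pr D i c)
      = pu pr D Y c + (\<Sum>i\<in>{i\<in>W - Y. pr i > 0}. u_item pr D i c)"
    unfolding pu_def using fW YW by (intro sum.union_disjoint) (auto intro: finite_subset)
  also have "(\<Sum>i\<in>{i\<in>W - Y. pr i > 0}. u_item pr D i c) \<le> rpu pr rk D Y c"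
    unfolding rpu_def
  proof (rule sum_mono2)
    show "finite {i \<in> trans D c. 0 < pr i \<and> after rk Y i}" using fin by simp
    show "{i \<in> W - Y. 0 < pr i} \<subseteq> {i \<in> trans D c. 0 < pr i \<and> after rk Y i}"
      using W later by auto
  qed (use wf_db_transD(1)[OF db c] in \<open>auto simp: u_item_def less_imp_le\<close>)
  also have "(\<Sum>i\<in>{i\<in>W. \<not> pr i > 0}. u_item pr D i c) \<le> 0"
    unfolding u_item_def
    by (rule sum_nonpos) (use W wf_db_transD(1)[OF db c] in \<open>force intro: mult_nonpos_nonneg\<close>)
  finally show ?thesis by simp
qed

lemma p_set_le_pro:
  assumes db: "wf_db I D" and c: "c < ntr D" and W: "W \<subseteq> trans D c" and YW: "Y \<subseteq> W"
  shows "p_set D W c \<le> pro D Y c"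
proof -
  have "finite W" using wf_db_finite_trans[OF db c] W finite_subset by blast
  then have "p_set D W c = pro D Y c * (\<Prod>i\<in>W - Y. prb D c i)"
    unfolding p_set_def pro_def using YW by (metis prod.subset_diff mult.commute)
  also have "\<dots> \<le> pro D Y c"
    using pro_nonneg[OF db c] W YW wf_db_transD[OF db c]
    by (intro mult_right_le_one_le prod_nonneg prod_le_1) (auto simp: subset_iff less_imp_le)
  finally show ?thesis .
qed

lemma util_le_sum_pu_rpu:
  assumes db: "wf_db I D" and "Y \<subseteq> V" "V \<subseteq> W" and later: "\<forall>i\<in>W - Y. after rk Y i"
  shows "util pr D W \<le> (\<Sum>c\<in>TX D V. pu pr D Y c + rpu pr rk D Y c)"
proof -
  have "util pr D W \<le> (\<Sum>c\<in>TX D W. pu pr D Y c + rpu pr rk D Y c)"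
    unfolding util_def TX_def
    by (rule sum_mono) (use assms in \<open>auto intro!: u_set_le_pu_rpu\<close>)
  also have "\<dots> \<le> (\<Sum>c\<in>TX D V. pu pr D Y c + rpu pr rk D Y c)"
    using assms by (intro sum_mono2 TX_finite TX_antimono add_nonneg_nonneg pu_nonneg rpu_nonneg)
      (auto simp: TX_def)
  finally show ?thesis .
qed

lemma Pro_le_sum_pro:
  assumes db: "wf_db I D" and "Y \<subseteq> V" "V \<subseteq> W"
  shows "Pro D W \<le> (\<Sum>c\<in>TX D V. pro D Y c)"
proof -
  have "Pro D W \<le> (\<Sum>c\<in>TX D W. pro D Y c)"
    unfolding Pro_def TX_def
    by (rule sum_mono) (use assms in \<open>auto intro!: p_set_le_pro\<close>)
  also have "\<dots> \<le> (\<Sum>c\<in>TX D V. pro D Y c)"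
    using assms by (intro sum_mono2 TX_finite TX_antimono pro_nonneg) (auto simp: TX_def)
  finally show ?thesis .
qed

lemma descendant_of_insert_after:
  assumes "after rk X z" "descendant rk I (insert z X) W"
  shows "\<forall>i\<in>W - X. after rk X i"
  using assms unfolding descendant_def after_def by (metis Diff_iff insert_iff)

theorem lemma1:
  fixes I :: "'a set" and D :: "'a udb" and pr :: "'a \<Rightarrow> real" and rk :: "'a \<Rightarrow> nat"
    and minUtil minPro :: real and P Y Z :: "'a set" and y z :: 'a
  assumes db: "wf_db I D"
    and ord: "inj_on rk I"
    and P: "P \<subseteq> I"
    and y: "y \<in> I - P" and z: "z \<in> I - P"
    and yz: "rk y < rk z"
    and Py: "after rk P y" and Pz: "after rk P z"
    and Y: "Y = insert y P" and Z: "Z = insert z P"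
    and cond: "SUMX D Y (pu pr D) + SUMX D Y (rpu pr rk D)
                 - (\<Sum>c\<in>{c\<in>TX D Y. \<not> Z \<subseteq> trans D c}. pu pr D Y c + rpu pr rk D Y c) < minUtil
             \<or> SUMX D Y (pro D)
                 - (\<Sum>c\<in>{c\<in>TX D Y. \<not> Z \<subseteq> trans D c}. pro D Y c) < minPro * real (ntr D)"
  shows "\<not> PHUI pr D minUtil minPro (Y \<union> Z)
         \<and> (\<forall>W. descendant rk I (Y \<union> Z) W \<longrightarrow> \<not> PHUI pr D minUtil minPro W)"
proof -
  have YZ: "Y \<union> Z = insert z Y" using Y Z by auto
  have z_after_Y: "after rk Y z" using Py Pz yz Y unfolding after_def by auto
  have cond': "(\<Sum>c\<in>TX D (Y \<union> Z). pu pr D Y c + rpu pr rk D Y c) < minUtil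
      \<or> (\<Sum>c\<in>TX D (Y \<union> Z). pro D Y c) < minPro * real (ntr D)"
    using cond SUMX_diff_not_containing[of D Y "\<lambda>X c. pu pr D X c + rpu pr rk D X c" Z]
      SUMX_diff_not_containing[of D Y "pro D" Z]
    unfolding SUMX_def by (simp add: sum.distrib)
  have not_PHUI: "\<not> PHUI pr D minUtil minPro W"
    if YZW: "Y \<union> Z \<subseteq> W" and later: "\<forall>i\<in>W - Y. after rk Y i" for W
  proof -
    have "util pr D W \<le> (\<Sum>c\<in>TX D (Y \<union> Z). pu pr D Y c + rpu pr rk D Y c)"
      using util_le_sum_pu_rpu[OF db _ YZW later] by simp
    moreover have "Pro D W \<le> (\<Sum>c\<in>TX D (Y \<union> Z). pro D Y c)"
      using Pro_le_sum_pro[OF db _ YZW] by simp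
    ultimately show ?thesis using cond' unfolding PHUI_def by linarith
  qed
  have "\<not> PHUI pr D minUtil minPro (Y \<union> Z)"
    by (rule not_PHUI) (use z_after_Y YZ in auto)
  moreover have "\<not> PHUI pr D minUtil minPro W" if "descendant rk I (Y \<union> Z) W" for W
    using that descendant_of_insert_after[OF z_after_Y, of I W] not_PHUI[of W]
    unfolding YZ descendant_def by blast
  ultimately show ?thesis by blast
qed

end
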